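(* Let $n=3$. For a $3\times3$ signature matrix $\varepsilon$, an $\varepsilon$-$\mathrm{SL}_2$-tiling of $\mathbb{Z}^3$ exists if and only if $\varepsilon_{12}\varepsilon_{13}\varepsilon_{23}=-1$; in particular there are exactly $4$ signature matrices $\varepsilon$ for which an $\varepsilon$-$\mathrm{SL}_2$-tiling of $\mathbb{Z}^3$ exists. For each such $\varepsilon$ the $\varepsilon$-$\mathrm{SL}_2$-tiling is unique up to translation, i.e. any two $\varepsilon$-$\mathrm{SL}_2$-tilings $(a_{\mathbf{i}})$, $(b_{\mathbf{i}})$ satisfy $b_{\mathbf{i}}=a_{\mathbf{i}+\mathbf{t}}$ for all $\mathbf{i}$ for some fixed $\mathbf{t}\in\mathbb{Z}^3$.
   Context: Write $\mathbf{i}=(i_1,\dots,i_n)\in\mathbb{Z}^n$ and $\mathbf{e}_k$ for the $k$-th standard unit vector. A signature matrix is a symmetric $n\times n$ matrix $\varepsilon=(\varepsilon_{k\ell})$ with $\varepsilon_{k\ell}\in\{1,-1\}$ for $k\ne\ell$ and $\varepsilon_{kk}=-1$. Given a signature matrix $\varepsilon$, an array $(a_{\mathbf{i}})_{\mathbf{i}\in\mathbb{Z}^n}$ with all $a_{\mathbf{i}}\in\mathbb{Z}_{>0}$ is an $\varepsilon$-$\mathrm{SL}_2$-tiling of $\mathbb{Z}^n$ if for all $\mathbf{i}\in\mathbb{Z}^n$ and all $k\ne\ell$: $a_{\mathbf{i}+\mathbf{e}_\ell}a_{\mathbf{i}+\mathbf{e}_k}-a_{\mathbf{i}}a_{\mathbf{i}+\mathbf{e}_k+\mathbf{e}_\ell}=\varepsilon_{k\ell}$.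 *)

theory Defs
  imports Main
begin

type_synonym pt3 = "int \<times> int \<times> int"

definition unitv :: "nat \<Rightarrow> pt3" where
  "unitv k = (if k = 1 then (1,0,0) else if k = 2 then (0,1,0) else (0,0,1))"

definition padd :: "pt3 \<Rightarrow> pt3 \<Rightarrow> pt3" where
  "padd x y = (fst x + fst y, fst (snd x) + fst (snd y), snd (snd x) + snd (snd y))"

text \<open>A 3x3 signature matrix, represented as a function on indices {1,2,3}
  (and zero outside, so that distinct functions are distinct matrices).\<close>
definition signature3 :: "(nat \<Rightarrow> nat \<Rightarrow> int) \<Rightarrow> bool" where
  "signature3 eps \<longleftrightarrow>
     (\<forall>k l. eps k l = eps l k) \<and>
     (\<forall>k \<in> {1,2,3}. eps k k = -1) \<and>
     (\<forall>k \<in> {1,2,3}. \<forall>l \<in> {1,2,3}. k \<noteq> l \<longrightarrow> eps k l \<in> {1, -1}) \<and>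
     (\<forall>k l. k \<notin> {1,2,3} \<or> l \<notin> {1,2,3} \<longrightarrow> eps k l = 0)"

definition sl2_tiling3 :: "(nat \<Rightarrow> nat \<Rightarrow> int) \<Rightarrow> (pt3 \<Rightarrow> int) \<Rightarrow> bool" where
  "sl2_tiling3 eps a \<longleftrightarrow>
     (\<forall>i. a i > 0) \<and>
     (\<forall>i. \<forall>k \<in> {1,2,3}. \<forall>l \<in> {1,2,3}. k \<noteq> l \<longrightarrow>
        a (padd i (unitv l)) * a (padd i (unitv k))
          - a i * a (padd (padd i (unitv k)) (unitv l)) = eps k l)"

end

theory Submission
  imports Defs "HOL-Library.Product_Plus"
begin

text \<open>
  The four face relations around a unit cube imply a polynomial identity which, since all
  entries are positive, forces two adjacent or two diagonal entries of the cube to coincide,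
  depending on the signs. If \<open>\<epsilon>\<^sub>1\<^sub>2\<epsilon>\<^sub>1\<^sub>3\<epsilon>\<^sub>2\<^sub>3 = 1\<close>, some face carries \<open>\<epsilon>\<^sub>k\<^sub>l = 1\<close> with an adjacent
  coincidence, and at a global minimum of the tiling the relation of that face becomes
  \<open>m\<^sup>2 - uv = 1\<close> with \<open>u, v \<ge> m\<close>, which is absurd. If the product is \<open>-1\<close>, the coincidences
  make \<open>a\<close> constant along \<open>e\<^sub>2 + \<epsilon>\<^sub>1\<^sub>2e\<^sub>1\<close> and \<open>e\<^sub>3 + \<epsilon>\<^sub>1\<^sub>3e\<^sub>1\<close>, so
  \<open>a(x,y,z) = f(x - \<epsilon>\<^sub>1\<^sub>2y - \<epsilon>\<^sub>1\<^sub>3z)\<close> for a positive sequence with \<open>f(s-1)f(s+1) - f(s)\<^sup>2 = 1\<close>.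
  Such a sequence takes the value 1 at two consecutive places (look at its minimum) and is
  determined by two consecutive values, so it is unique up to translation; the odd-index
  Fibonacci numbers \<open>\<dots>, 5, 2, 1, 1, 2, 5, \<dots>\<close> give one, and conversely every such sequence
  yields a tiling.
\<close>

lemma padd_eq_plus: "padd = (+)"
  by (simp add: fun_eq_iff padd_def plus_prod_def)

text \<open>The vertex values of a unit cube spanned by \<open>e\<^sub>k, e\<^sub>l, e\<^sub>m\<close>: \<open>a0\<close> at the base point,
  \<open>akl\<close> at the base point plus \<open>e\<^sub>k + e\<^sub>l\<close>, etc.; the hypotheses are the relations on the four
  faces containing the direction \<open>e\<^sub>m\<close>.\<close>
lemma unit_cube_identity:
  fixes a0 ak al am akl akm alm aklm e e' :: "'a::comm_ring_1"
  assumes "am * ak - a0 * akm = e" "am * al - a0 * alm = e'"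
    and "akm * akl - ak * aklm = e'" "alm * akl - al * aklm = e"
  shows "akl * (ak * e' - al * e) = a0 * (al * e' - ak * e)"
proof -
  define D where "D = al * akm - ak * alm"
  have "akl * D = al * (akm * akl - ak * aklm) - ak * (alm * akl - al * aklm)"
    unfolding D_def by (simp add: algebra_simps)
  also have "\<dots> = al * e' - ak * e" using assms(3,4) by simp
  finally have top: "akl * D = al * e' - ak * e" .
  have "a0 * D = ak * (am * al - a0 * alm) - al * (am * ak - a0 * akm)"
    unfolding D_def by (simp add: algebra_simps)
  also have "\<dots> = ak * e' - al * e" using assms(1,2) by simp
  finally have bottom: "a0 * D = ak * e' - al * e" .
  show ?thesis using top bottom by (metis mult.left_commute)
qed

lemma signature3_sym: "signature3 eps \<Longrightarrow> eps l k = eps k l"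
  unfolding signature3_def by metis

lemma signature3_off_diagonal:
  "signature3 eps \<Longrightarrow> k \<in> {1,2,3} \<Longrightarrow> l \<in> {1,2,3} \<Longrightarrow> k \<noteq> l \<Longrightarrow> eps k l \<in> {1, -1}"
  unfolding signature3_def by blast

lemma sl2_tiling3_pos: "sl2_tiling3 eps a \<Longrightarrow> a i > 0"
  unfolding sl2_tiling3_def by blast

lemma sl2_tiling3_rel:
  assumes "sl2_tiling3 eps a" "k \<in> {1,2,3}" "l \<in> {1,2,3}" "k \<noteq> l"
  shows "a (i + unitv l) * a (i + unitv k) - a i * a (i + unitv k + unitv l) = eps k l"
  using assms unfolding sl2_tiling3_def padd_eq_plus by blast

lemma insert3_eq_123D:
  assumes "{k, l, m} = {1, 2, 3 :: nat}"
  shows "k \<in> {1,2,3}" "l \<in> {1,2,3}" "m \<in> {1,2,3}" "k \<noteq> l" "k \<noteq> m" "l \<noteq> m"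
proof -
  show "k \<in> {1,2,3}" "l \<in> {1,2,3}" "m \<in> {1,2,3}" using assms by auto
  have "card {k, l, m} = 3" using assms by simp
  then show "k \<noteq> l" "k \<noteq> m" "l \<noteq> m" by (auto simp: card_insert_if split: if_splits)
qed

lemma sl2_tiling3_cube:
  assumes "sl2_tiling3 eps a" "{k, l, m} = {1, 2, 3}"
  defines "ek \<equiv> unitv k" and "el \<equiv> unitv l" and "em \<equiv> unitv m"
  shows "a (i + ek + el) * (a (i + ek) * eps l m - a (i + el) * eps k m)
       = a i * (a (i + el) * eps l m - a (i + ek) * eps k m)"
proof (rule unit_cube_identity)
  note klm = insert3_eq_123D[OF assms(2)]
  note rel = sl2_tiling3_rel[OF assms(1)]
  show "a (i + em) * a (i + ek) - a i * a (i + ek + em) = eps k m"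
    using rel[of k m i] klm unfolding ek_def em_def by blast
  show "a (i + em) * a (i + el) - a i * a (i + el + em) = eps l m"
    using rel[of l m i] klm unfolding el_def em_def by blast
  show "a (i + ek + em) * a (i + ek + el) - a (i + ek) * a (i + ek + el + em) = eps l m"
    using rel[of l m "i + ek"] klm unfolding ek_def el_def em_def by (simp add: ac_simps)
  show "a (i + el + em) * a (i + ek + el) - a (i + el) * a (i + ek + el + em) = eps k m"
    using rel[of k m "i + el"] klm unfolding ek_def el_def em_def by (simp add: ac_simps)
qed

lemma sl2_tiling3_adjacent:
  assumes "signature3 eps" "sl2_tiling3 eps a" "{k, l, m} = {1, 2, 3}" "eps k m = eps l m"
  shows "a (i + unitv k) = a (i + unitv l)"
proof -
  note klm = insert3_eq_123D[OF assms(3)]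
  have "(a (i + unitv k + unitv l) + a i) * (a (i + unitv k) - a (i + unitv l)) * eps k m = 0"
    using sl2_tiling3_cube[OF assms(2,3), of i] assms(4) by (simp add: algebra_simps)
  moreover have "a (i + unitv k + unitv l) + a i \<noteq> 0"
    using sl2_tiling3_pos[OF assms(2)] by (metis add_pos_pos less_irrefl)
  moreover have "eps k m \<noteq> 0" using signature3_off_diagonal[OF assms(1)] klm by fastforce
  ultimately show ?thesis by simp
qed

lemma sl2_tiling3_diagonal:
  assumes "signature3 eps" "sl2_tiling3 eps a" "{k, l, m} = {1, 2, 3}" "eps l m = - eps k m"
  shows "a (i + unitv k + unitv l) = a i"
proof -
  note klm = insert3_eq_123D[OF assms(3)]
  have "(a (i + unitv k + unitv l) - a i) * (a (i + unitv k) + a (i + unitv l)) * eps k m = 0"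
    using sl2_tiling3_cube[OF assms(2,3), of i] assms(4) by (simp add: algebra_simps)
  moreover have "a (i + unitv k) + a (i + unitv l) \<noteq> 0"
    using sl2_tiling3_pos[OF assms(2)] by (metis add_pos_pos less_irrefl)
  moreover have "eps k m \<noteq> 0" using signature3_off_diagonal[OF assms(1)] klm by fastforce
  ultimately show ?thesis by simp
qed

lemma pos_int_fun_has_min:
  fixes f :: "'a \<Rightarrow> int"
  assumes "\<And>i. f i > 0"
  obtains p where "\<And>i. f p \<le> f i"
proof -
  obtain p where "\<forall>i. nat (f p) \<le> nat (f i)"
    using ex_has_least_nat[of "\<lambda>_. True" undefined "\<lambda>i. nat (f i)"] by auto
  then show thesis using that assms by (metis nat_le_eq_zle)
qed

lemma sl2_tiling3_sign_product:
  assumes sig: "signature3 eps" and til: "sl2_tiling3 eps a"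
  shows "eps 1 2 * eps 1 3 * eps 2 3 = -1"
proof (rule ccontr)
  assume ne: "eps 1 2 * eps 1 3 * eps 2 3 \<noteq> -1"
  obtain k l m where klm: "{k, l, m} = {1, 2, 3}" "eps k l = 1" "eps k m = eps l m"
  proof -
    have "eps 1 2 \<in> {1, -1}" "eps 1 3 \<in> {1, -1}" "eps 2 3 \<in> {1, -1}"
      using signature3_off_diagonal[OF sig] by simp_all
    then consider "eps 1 2 = 1" "eps 1 3 = eps 2 3" | "eps 1 3 = 1" "eps 1 2 = eps 3 2"
      | "eps 2 3 = 1" "eps 2 1 = eps 3 1"
      using ne signature3_sym[OF sig] by fastforce
    then show thesis
      by cases (use that[of 1 2 3] that[of 1 3 2] that[of 2 3 1] in \<open>auto simp: insert_commute\<close>)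
  qed
  obtain p where min: "\<And>i. a p \<le> a i"
    using pos_int_fun_has_min sl2_tiling3_pos[OF til] by blast
  define i where "i = p - unitv k"
  have "a p = a (i + unitv l)"
    using sl2_tiling3_adjacent[OF sig til klm(1,3), of i] by (simp add: i_def)
  moreover have "a (i + unitv l) * a p - a i * a (p + unitv l) = 1"
    using sl2_tiling3_rel[OF til, of k l i] insert3_eq_123D[OF klm(1)] klm(2) by (simp add: i_def)
  moreover have "a p * a p \<le> a i * a (p + unitv l)"
    using min sl2_tiling3_pos[OF til] by (meson less_imp_le mult_mono)
  ultimately show False by simp
qed

lemma sl2_tiling3_shift:
  assumes sig: "signature3 eps" and til: "sl2_tiling3 eps a"
    and klm: "{k, l, m} = {1, 2, 3}" and prod: "eps k l * eps k m * eps l m = -1"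
  shows "a (i + unitv l) = a (if eps k l = 1 then i - unitv k else i + unitv k)"
proof -
  note distinct = insert3_eq_123D[OF klm]
  have v: "eps k l \<in> {1, -1}" "eps k m \<in> {1, -1}" "eps l m \<in> {1, -1}"
    using signature3_off_diagonal[OF sig] distinct by simp_all
  show ?thesis
  proof (cases "eps k l = 1")
    case True
    then have "eps l m = - eps k m" using v prod by auto
    then show ?thesis using sl2_tiling3_diagonal[OF sig til klm, of "i - unitv k"] True by simp
  next
    case False
    then have "eps k m = eps l m" using v prod by auto
    then show ?thesis using sl2_tiling3_adjacent[OF sig til klm, of i] False by simp
  qed
qed

lemma int_shift_collapse:
  fixes g :: "int \<Rightarrow> int \<Rightarrow> 'a"
  assumes step: "\<And>x y. g x (y + 1) = g (x + s) y"
  shows "g x y = g (x + s * y) 0"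
proof (induct y arbitrary: x rule: int_induct[where k = 0])
  case (step1 y)
  have "g x (y + 1) = g (x + s) y" by (rule step)
  also have "\<dots> = g (x + s * (y + 1)) 0" using step1(2)[of "x + s"] by (simp add: algebra_simps)
  finally show ?case .
next
  case (step2 y)
  have "g x (y - 1) = g (x - s) y" using step[of "x - s" "y - 1"] by simp
  also have "\<dots> = g (x + s * (y - 1)) 0" using step2(2)[of "x - s"] by (simp add: algebra_simps)
  finally show ?case .
qed simp

lemma sl2_tiling3_factor_line:
  assumes sig: "signature3 eps" and til: "sl2_tiling3 eps a"
    and prod: "eps 1 2 * eps 1 3 * eps 2 3 = -1"
  shows "a (x, y, z) = a (x - eps 1 2 * y - eps 1 3 * z, 0, 0)"
proof -
  have v: "eps 1 2 \<in> {1, -1}" "eps 1 3 \<in> {1, -1}"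
    using signature3_off_diagonal[OF sig] by simp_all
  have step_y: "a (x, y + 1, z) = a (x - eps 1 2, y, z)" for x y z
    using sl2_tiling3_shift[OF sig til _ prod, where i = "(x, y, z)"] v
    by (auto simp: unitv_def)
  have step_z: "a (x, y, z + 1) = a (x - eps 1 3, y, z)" for x y z
    using sl2_tiling3_shift[OF sig til, where k = 1 and l = 3 and m = 2 and i = "(x, y, z)"]
      prod v signature3_sym[OF sig]
    by (auto simp: unitv_def insert_commute mult.commute)
  have "a (x, y, z) = a (x - eps 1 2 * y, 0, z)"
    using int_shift_collapse[of "\<lambda>x y. a (x, y, z)" "- eps 1 2"] step_y by simp
  also have "\<dots> = a (x - eps 1 2 * y - eps 1 3 * z, 0, 0)"
    using int_shift_collapse[of "\<lambda>x z. a (x, 0, z)" "- eps 1 3"] step_z by simp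
  finally show ?thesis .
qed

definition sl2_line :: "(int \<Rightarrow> int) \<Rightarrow> bool" where
  "sl2_line f \<longleftrightarrow> (\<forall>s. f s > 0) \<and> (\<forall>s. f (s - 1) * f (s + 1) - f s * f s = 1)"

lemma sl2_lineD:
  assumes "sl2_line f"
  shows "f s > 0" "f (s - 1) * f (s + 1) = f s * f s + 1"
  using assms unfolding sl2_line_def by (auto simp: algebra_simps)

lemma sl2_line_shift: "sl2_line f \<Longrightarrow> sl2_line (\<lambda>s. f (s + c))"
  unfolding sl2_line_def by (metis add.commute add_diff_eq add.left_commute)

lemma sl2_tiling3_line:
  assumes sig: "signature3 eps" and til: "sl2_tiling3 eps a"
    and prod: "eps 1 2 * eps 1 3 * eps 2 3 = -1"
  shows "sl2_line (\<lambda>s. a (s, 0, 0))"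
proof -
  let ?f = "\<lambda>s. a (s, 0, 0)"
  have rel: "?f (s - eps 1 2) * ?f (s + 1) - ?f s * ?f (s + 1 - eps 1 2) = eps 1 2" for s
    using sl2_tiling3_rel[OF til, of 1 2 "(s, 0, 0)"]
      sl2_tiling3_factor_line[OF sig til prod, of s 1 0]
      sl2_tiling3_factor_line[OF sig til prod, of "s + 1" 1 0]
    by (simp add: unitv_def)
  have "?f (s - 1) * ?f (s + 1) - ?f s * ?f s = 1" for s
  proof (cases "eps 1 2 = 1")
    case True
    then show ?thesis using rel[of s] by (simp add: mult.commute)
  next
    case False
    then have "eps 1 2 = -1" using signature3_off_diagonal[OF sig, of 1 2] by simp
    then show ?thesis using rel[of "s - 1"] by simp
  qed
  then show ?thesis unfolding sl2_line_def using sl2_tiling3_pos[OF til] by blast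
qed

lemma sl2_line_step:
  assumes f: "sl2_line f" and "\<sigma> \<in> {1, -1}" "\<tau> \<in> {1, -1}"
  shows "f (s + \<sigma>) * f (s + \<tau>) - f s * f (s + \<sigma> + \<tau>) = - \<sigma> * \<tau>"
proof -
  note rec = sl2_lineD(2)[OF f]
  from assms(2,3) consider "\<sigma> = 1" "\<tau> = 1" | "\<sigma> = 1" "\<tau> = -1" | "\<sigma> = -1" "\<tau> = 1"
    | "\<sigma> = -1" "\<tau> = -1" by blast
  then show ?thesis
  proof cases
    case 1 then show ?thesis using rec[of "s + 1"] by (simp add: add.assoc)
  next
    case 2 then show ?thesis using rec[of s] by (simp add: mult.commute)
  next
    case 3 then show ?thesis using rec[of s] by simp
  next
    case 4 then show ?thesis using rec[of "s - 1"] by (simp add: mult.commute)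
  qed
qed

lemma sl2_line_adjacent_ones:
  assumes f: "sl2_line f"
  obtains t where "f t = 1" "f (t + 1) = 1"
proof -
  obtain s where min: "\<And>t. f s \<le> f t" using pos_int_fun_has_min sl2_lineD(1)[OF f] by blast
  define m where "m = f s"
  have m: "m > 0" "m \<le> f (s - 1)" "m \<le> f (s + 1)"
    unfolding m_def using min sl2_lineD(1)[OF f] by auto
  have rec: "f (s - 1) * f (s + 1) = m * m + 1" using sl2_lineD(2)[OF f] by (simp add: m_def)
  have "f (s - 1) = m \<or> f (s + 1) = m"
  proof (rule ccontr)
    assume "\<not> ?thesis"
    then have "(m + 1) * (m + 1) \<le> f (s - 1) * f (s + 1)"
      using m by (intro mult_mono) auto
    then show False using rec m by (simp add: algebra_simps)
  qed
  moreover have "m = 1" if "m * n = m * m + 1" for n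
  proof -
    have "m * (n - m) = 1" using that by (simp add: algebra_simps)
    then show "m = 1" using m(1) pos_zmult_eq_1_iff by blast
  qed
  ultimately have "m = 1" "f (s - 1) = 1 \<or> f (s + 1) = 1"
    using rec by (metis mult.commute)+
  then show thesis using that[of s] that[of "s - 1"] by (auto simp: m_def)
qed

lemma sl2_line_unique:
  assumes f: "sl2_line f" and g: "sl2_line g" and "f t = g t" "f (t + 1) = g (t + 1)"
  shows "f s = g s"
proof -
  have "f s = g s \<and> f (s + 1) = g (s + 1)"
  proof (induct s rule: int_induct[where k = t])
    case (step1 s)
    then have "f s * f (s + 1 + 1) = f s * g (s + 1 + 1)"
      using sl2_lineD(2)[OF f, of "s + 1"] sl2_lineD(2)[OF g, of "s + 1"] by simp
    then show ?case using step1 sl2_lineD(1)[OF f, of s] by simp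
  next
    case (step2 s)
    then have "f (s - 1) * f (s + 1) = g (s - 1) * f (s + 1)"
      using sl2_lineD(2)[OF f, of s] sl2_lineD(2)[OF g, of s] by simp
    then show ?case using step2 sl2_lineD(1)[OF f, of "s + 1"] by simp
  qed (use assms in simp)
  then show ?thesis ..
qed

lemma sl2_line_translate:
  assumes f: "sl2_line f" and g: "sl2_line g"
  obtains c where "\<And>s. g s = f (s + c)"
proof -
  obtain tf where tf: "f tf = 1" "f (tf + 1) = 1" using sl2_line_adjacent_ones[OF f] .
  obtain tg where tg: "g tg = 1" "g (tg + 1) = 1" using sl2_line_adjacent_ones[OF g] .
  have "g s = f (s + (tf - tg))" for s
    by (rule sl2_line_unique[OF g sl2_line_shift[OF f], of tg])
      (use tf tg in \<open>simp_all add: algebra_simps\<close>)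
  then show thesis using that by blast
qed

text \<open>\<open>odd_fib n\<close> is the Fibonacci number \<open>F\<^sub>2\<^sub>n\<^sub>-\<^sub>1\<close> (with \<open>F\<^sub>-\<^sub>1 = 1\<close>).\<close>
fun odd_fib :: "nat \<Rightarrow> int" where
  "odd_fib 0 = 1"
| "odd_fib (Suc 0) = 1"
| "odd_fib (Suc (Suc n)) = 3 * odd_fib (Suc n) - odd_fib n"

lemma odd_fib_mono: "1 \<le> odd_fib n \<and> odd_fib n \<le> odd_fib (Suc n)"
  by (induct n) auto

lemma odd_fib_sl2: "odd_fib n * odd_fib (Suc (Suc n)) - odd_fib (Suc n) * odd_fib (Suc n) = 1"
  by (induct n) (auto simp: algebra_simps)

definition odd_fib_line :: "int \<Rightarrow> int" where
  "odd_fib_line s = odd_fib (nat (if s \<ge> 1 then s else 1 - s))"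

lemma odd_fib_line_sl2: "sl2_line odd_fib_line"
proof -
  have right: "odd_fib_line (s - 1) * odd_fib_line (s + 1) - odd_fib_line s * odd_fib_line s = 1"
    if "s \<ge> 1" for s
  proof (cases "s = 1")
    case True
    then show ?thesis by (simp add: odd_fib_line_def numeral_eq_Suc)
  next
    case False
    define n where "n = nat (s - 2)"
    have "nat (s - 1) = Suc n" "nat s = Suc (Suc n)" "nat (s + 1) = Suc (Suc (Suc n))"
      using that False by (auto simp: n_def)
    then show ?thesis
      using odd_fib_sl2[of "Suc n"] that False by (simp add: odd_fib_line_def)
  qed
  have symm: "odd_fib_line (1 - s) = odd_fib_line s" for s
    by (simp add: odd_fib_line_def)
  have "odd_fib_line (s - 1) * odd_fib_line (s + 1) - odd_fib_line s * odd_fib_line s = 1" for s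
  proof (cases "s \<ge> 1")
    case False
    then show ?thesis
      using right[of "1 - s"] symm[of "s - 1"] symm[of "s + 1"] symm[of s] by (simp add: mult.commute)
  qed (rule right)
  moreover have "odd_fib_line s > 0" for s
    using odd_fib_mono by (simp add: odd_fib_line_def order_less_le_trans[OF zero_less_one])
  ultimately show ?thesis unfolding sl2_line_def by blast
qed

lemma sl2_tiling3_of_line:
  assumes sig: "signature3 eps" and prod: "eps 1 2 * eps 1 3 * eps 2 3 = -1"
    and f: "sl2_line f"
  shows "sl2_tiling3 eps (\<lambda>(x, y, z). f (x - eps 1 2 * y - eps 1 3 * z))"
proof -
  define lin :: "pt3 \<Rightarrow> int" where "lin = (\<lambda>(x, y, z). x - eps 1 2 * y - eps 1 3 * z)"
  define c :: "nat \<Rightarrow> int" where "c k = (if k = 1 then 1 else - eps 1 k)" for k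
  have lin_shift: "lin (i + unitv k) = lin i + c k" if "k \<in> {1,2,3}" for i k
    using that by (cases i) (auto simp: lin_def c_def unitv_def algebra_simps)
  have v: "eps 1 2 \<in> {1, -1}" "eps 1 3 \<in> {1, -1}"
    using signature3_off_diagonal[OF sig] by simp_all
  then have "eps 2 3 = - eps 1 2 * eps 1 3" using prod by auto
  then have c_eps: "- c l * c k = eps k l" if "k \<in> {1,2,3}" "l \<in> {1,2,3}" "k \<noteq> l" for k l
    using that signature3_sym[OF sig] v by (auto simp: c_def)
  have c_unit: "c k \<in> {1, -1}" if "k \<in> {1,2,3}" for k
    using that v by (auto simp: c_def)
  have "sl2_tiling3 eps (\<lambda>i. f (lin i))"
    unfolding sl2_tiling3_def padd_eq_plus
  proof (intro conjI allI ballI impI)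
    fix i :: pt3 and k l :: nat
    assume kl: "k \<in> {1,2,3}" "l \<in> {1,2,3}" "k \<noteq> l"
    have "f (lin i + c l) * f (lin i + c k) - f (lin i) * f (lin i + c l + c k) = - c l * c k"
      using sl2_line_step[OF f c_unit c_unit] kl by blast
    then show "f (lin (i + unitv l)) * f (lin (i + unitv k)) - f (lin i) * f (lin (i + unitv k + unitv l))
        = eps k l"
      using kl lin_shift[of l "i + unitv k"] lin_shift c_eps by (simp add: ac_simps)
  qed (use sl2_lineD(1)[OF f] in auto)
  moreover have "(\<lambda>i. f (lin i)) = (\<lambda>(x, y, z). f (x - eps 1 2 * y - eps 1 3 * z))"
    by (auto simp: lin_def)
  ultimately show ?thesis by simp
qed

lemma sl2_tiling3_exists_iff:
  assumes "signature3 eps"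
  shows "(\<exists>a. sl2_tiling3 eps a) \<longleftrightarrow> eps 1 2 * eps 1 3 * eps 2 3 = -1"
  using sl2_tiling3_sign_product[OF assms] sl2_tiling3_of_line[OF assms _ odd_fib_line_sl2]
  by blast

lemma sl2_tiling3_unique_up_to_translation:
  assumes sig: "signature3 eps" and ta: "sl2_tiling3 eps a" and tb: "sl2_tiling3 eps b"
  shows "\<exists>t. \<forall>i. b i = a (padd i t)"
proof -
  have prod: "eps 1 2 * eps 1 3 * eps 2 3 = -1" by (rule sl2_tiling3_sign_product[OF sig ta])
  obtain c where c: "\<And>s. b (s, 0, 0) = a (s + c, 0, 0)"
    using sl2_line_translate[OF sl2_tiling3_line[OF sig ta prod] sl2_tiling3_line[OF sig tb prod]]
    by blast
  have "b (x, y, z) = a (padd (x, y, z) (c, 0, 0))" for x y z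
  proof -
    have "b (x, y, z) = a (x - eps 1 2 * y - eps 1 3 * z + c, 0, 0)"
      using sl2_tiling3_factor_line[OF sig tb prod] c by simp
    also have "\<dots> = a (x + c, y, z)"
      using sl2_tiling3_factor_line[OF sig ta prod, of "x + c" y z] by (simp add: algebra_simps)
    finally show ?thesis by (simp add: padd_def)
  qed
  then show ?thesis by auto
qed

definition sigmat :: "int \<Rightarrow> int \<Rightarrow> int \<Rightarrow> nat \<Rightarrow> nat \<Rightarrow> int" where
  "sigmat p q r k l =
     (if k \<in> {1,2,3} \<and> l \<in> {1,2,3} then
        if k = l then -1 else if k + l = 3 then p else if k + l = 4 then q else r
      else 0)"

lemma sigmat_entries: "sigmat p q r 1 2 = p" "sigmat p q r 1 3 = q" "sigmat p q r 2 3 = r"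
  by (simp_all add: sigmat_def)

lemma sigmat_eq_iff [simp]: "sigmat p q r = sigmat p' q' r' \<longleftrightarrow> p = p' \<and> q = q' \<and> r = r'"
  by (metis sigmat_entries)

lemma signature3_sigmat:
  "p \<in> {1, -1} \<Longrightarrow> q \<in> {1, -1} \<Longrightarrow> r \<in> {1, -1} \<Longrightarrow> signature3 (sigmat p q r)"
  unfolding signature3_def sigmat_def by auto

lemma signature3_eq_sigmat:
  assumes sig: "signature3 eps"
  shows "eps = sigmat (eps 1 2) (eps 1 3) (eps 2 3)"
proof (intro ext)
  fix k l :: nat
  have diag: "eps k k = -1" if "k \<in> {1,2,3}" for k
    using sig that unfolding signature3_def by blast
  have outside: "eps k l = 0" if "k \<notin> {1,2,3} \<or> l \<notin> {1,2,3}"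
    using sig that unfolding signature3_def by blast
  show "eps k l = sigmat (eps 1 2) (eps 1 3) (eps 2 3) k l"
  proof (cases "k \<in> {1,2,3} \<and> l \<in> {1,2,3}")
    case True
    then consider "k = l" | "k = 1" "l = 2" | "k = 2" "l = 1" | "k = 1" "l = 3" | "k = 3" "l = 1"
      | "k = 2" "l = 3" | "k = 3" "l = 2" by auto
    then show ?thesis
      by cases (use True diag signature3_sym[OF sig] in \<open>simp_all add: sigmat_def\<close>)
  next
    case False
    then show ?thesis using outside unfolding sigmat_def by (subst if_not_P) auto
  qed
qed

lemma tileable_signatures:
  "{eps. signature3 eps \<and> (\<exists>a. sl2_tiling3 eps a)}
     = {sigmat (-1) (-1) (-1), sigmat (-1) 1 1, sigmat 1 (-1) 1, sigmat 1 1 (-1)}"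
    (is "?tileable = ?four")
proof
  show "?tileable \<subseteq> ?four"
  proof
    fix eps assume "eps \<in> ?tileable"
    then have sig: "signature3 eps" and prod: "eps 1 2 * eps 1 3 * eps 2 3 = -1"
      using sl2_tiling3_exists_iff by auto
    have "eps 1 2 \<in> {1, -1}" "eps 1 3 \<in> {1, -1}" "eps 2 3 \<in> {1, -1}"
      using signature3_off_diagonal[OF sig] by simp_all
    then have "(eps 1 2, eps 1 3, eps 2 3) \<in> {(-1, -1, -1), (-1, 1, 1), (1, -1, 1), (1, 1, -1)}"
      using prod by auto
    then show "eps \<in> ?four" by (subst signature3_eq_sigmat[OF sig]) auto
  qed
next
  have "sigmat p q r \<in> ?tileable" if "p \<in> {1, -1}" "q \<in> {1, -1}" "r \<in> {1, -1}" "p * q * r = -1"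
    for p q r
  proof -
    have "sigmat p q r 1 2 * sigmat p q r 1 3 * sigmat p q r 2 3 = -1"
      using that(4) by (simp only: sigmat_entries)
    then show ?thesis using sl2_tiling3_exists_iff signature3_sigmat[OF that(1-3)] by blast
  qed
  then show "?four \<subseteq> ?tileable" by simp
qed

theorem corollary2p5:
  shows "(\<forall>eps. signature3 eps \<longrightarrow>
            ((\<exists>a. sl2_tiling3 eps a) \<longleftrightarrow> eps 1 2 * eps 1 3 * eps 2 3 = -1))
       \<and> card {eps. signature3 eps \<and> (\<exists>a. sl2_tiling3 eps a)} = 4
       \<and> (\<forall>eps a b. signature3 eps \<longrightarrow> sl2_tiling3 eps a \<longrightarrow> sl2_tiling3 eps b \<longrightarrow>
            (\<exists>t. \<forall>i. b i = a (padd i t)))"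
proof (intro conjI allI impI)
  show "card {eps. signature3 eps \<and> (\<exists>a. sl2_tiling3 eps a)} = 4"
    unfolding tileable_signatures by simp
qed (use sl2_tiling3_exists_iff sl2_tiling3_unique_up_to_translation in blast)+

end
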